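(* Let $C$ and $C'$ be configurations on the same board of $l$ rows and $w$ columns containing $n$ tiles. If $C$ can be reconfigured into $C'$ by a sequence of steps each in direction west, south, or east, then there exists a step sequence $S$ of length $O(n l w^2)$, using only west, south and east steps, such that applying $S$ to $C$ yields $C'$.
   Context: A board is a rectangular region of the square lattice, formally a partition $B=(O,W)$ of a rectangular set of grid points into open locations $O$ and blocked locations $W$. A tile is a labeled unit square centered on an open location. A configuration $C=(B,P)$ consists of a board $B$ and a set $P$ of tiles, no two at the same location and none at a blocked location. A step in direction $d\in\{N,E,S,W\}$ transforms a configuration as follows: consider translating every tile by one unit in direction $d$; every tile whose translation would land on a blocked location is temporarily added to the blocked set, and this is repeated until no remaining tile's translation lands on a blocked location; then all remaining tiles are translated by one unit in direction $d$. A step sequence is a sequence of directions, applied as successive steps. $C$ can be reconfigured into $C'$ if some step sequence applied to $C$ yields $C'$. *)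

theory Defs
  imports Main
begin

text \<open>Locations are integer grid points (x, y): x is the column, y the row.\<close>
type_synonym loc = "int \<times> int"

datatype dir = N | E | S | W

fun dvec :: "dir \<Rightarrow> loc" where
  "dvec N = (0, 1)"
| "dvec E = (1, 0)"
| "dvec S = (0, -1)"
| "dvec W = (-1, 0)"

definition shift :: "loc \<Rightarrow> dir \<Rightarrow> loc" where
  "shift p d = (fst p + fst (dvec d), snd p + snd (dvec d))"

definition unshift :: "loc \<Rightarrow> dir \<Rightarrow> loc" where
  "unshift p d = (fst p - fst (dvec d), snd p - snd (dvec d))"

text \<open>A board with l rows and w columns: its open locations form a subset of the
  rectangle of grid points; every other grid point (blocked part of the rectangle or
  outside of it) is treated as blocked.\<close>
definition board :: "nat \<Rightarrow> nat \<Rightarrow> loc set \<Rightarrow> bool" where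
  "board l w Op \<longleftrightarrow> Op \<subseteq> {0..<int w} \<times> {0..<int l}"

type_synonym tiles = "loc \<Rightarrow> nat option"

definition config :: "loc set \<Rightarrow> tiles \<Rightarrow> bool" where
  "config Op P \<longleftrightarrow> dom P \<subseteq> Op"

inductive stuck :: "loc set \<Rightarrow> dir \<Rightarrow> tiles \<Rightarrow> loc \<Rightarrow> bool" for Op d P where
  blocked: "p \<in> dom P \<Longrightarrow> shift p d \<notin> Op \<Longrightarrow> stuck Op d P p"
| chain: "p \<in> dom P \<Longrightarrow> stuck Op d P (shift p d) \<Longrightarrow> stuck Op d P p"

definition step :: "loc set \<Rightarrow> dir \<Rightarrow> tiles \<Rightarrow> tiles" where
  "step Op d P q =
     (if q \<in> dom P \<and> stuck Op d P q then P q
      else if unshift q d \<in> dom P \<and> \<not> stuck Op d P (unshift q d) then P (unshift q d)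
      else None)"

fun steps :: "loc set \<Rightarrow> dir list \<Rightarrow> tiles \<Rightarrow> tiles" where
  "steps Op [] P = P"
| "steps Op (d # ds) P = steps Op ds (step Op d P)"

end

(*
  Take a shortest W/S/E step sequence from C to C'. Each of its steps moves some tile, and a south
  step that moves a tile lowers the sum of the tiles' row indices, so there are at most n l south
  steps. Between two south steps the sequence is a word over {E, W}. Along such a word every tile
  stays in its row, and its position is determined by its room towards the east, the number of free
  cells in the open run ahead of it: an E step decreases it, a W step increases it, saturating at 0
  and at the tile's total room T <= w on both sides. Hence a factor X^k Y^k X^k may be replaced by
  X^k and X^(w+1) by X^w without changing the outcome, so by minimality every run of the word has
  length at most w and no run is at most as long as both of its neighbours. The run lengths
  therefore increase strictly and then decrease strictly, and the word has length at most 2 w^2.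
  In total the sequence has length at most n l + (n l + 1) 2 w^2 <= 5 n l w^2.
*)

theory Submission
  imports Defs "HOL-Library.Sublist"
begin

section \<open>Open runs and the motion of a single tile\<close>

definition shift_by :: "loc \<Rightarrow> dir \<Rightarrow> int \<Rightarrow> loc" where
  "shift_by p d j = (fst p + j * fst (dvec d), snd p + j * snd (dvec d))"

fun opp :: "dir \<Rightarrow> dir" where
  "opp N = S" | "opp S = N" | "opp E = W" | "opp W = E"

lemma opp_opp [simp]: "opp (opp d) = d"
  by (cases d) auto

lemma opp_neq [simp]: "opp d \<noteq> d"
  by (cases d) auto

lemma shift_eq_shift_by: "shift p d = shift_by p d 1"
  by (simp add: shift_def shift_by_def)

lemma unshift_eq_shift_by: "unshift p d = shift_by p d (-1)"
  by (simp add: unshift_def shift_by_def)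

lemma shift_by_0 [simp]: "shift_by p d 0 = p"
  by (simp add: shift_by_def)

lemma shift_by_shift_by [simp]: "shift_by (shift_by p d i) d j = shift_by p d (i + j)"
  by (simp add: shift_by_def algebra_simps)

lemma shift_by_opp: "shift_by p (opp d) j = shift_by p d (- j)"
  by (cases d) (simp_all add: shift_by_def)

lemma shift_by_eq_iff [simp]: "shift_by p d i = shift_by p d j \<longleftrightarrow> i = j"
  by (cases d) (simp_all add: shift_by_def)

lemma shift_by_eq_self_iff [simp]: "shift_by p d j = p \<longleftrightarrow> j = 0"
  using shift_by_eq_iff[of p d j 0] by simp

lemma shift_by_cancel [simp]: "shift_by p d j = shift_by q d j \<longleftrightarrow> p = q"
  by (auto simp: shift_by_def prod_eq_iff)

lemma shift_by_1_opp [simp]: "shift_by (shift_by q d 1) (opp d) 1 = q"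
  by (simp add: shift_by_opp)

definition open_run :: "loc set \<Rightarrow> dir \<Rightarrow> loc \<Rightarrow> loc set" where
  "open_run Op d p =
     {shift_by p d j |j. 1 \<le> j \<and> (\<forall>i. 1 \<le> i \<and> i \<le> j \<longrightarrow> shift_by p d i \<in> Op)}"

lemma open_run_subset: "open_run Op d p \<subseteq> Op"
  unfolding open_run_def by auto

lemma finite_open_run: "finite Op \<Longrightarrow> finite (open_run Op d p)"
  using open_run_subset by (rule finite_subset)

lemma self_notin_open_run: "p \<notin> open_run Op d p"
  unfolding open_run_def by (auto dest: sym)

lemma open_run_blocked: "shift_by p d 1 \<notin> Op \<Longrightarrow> open_run Op d p = {}"
  unfolding open_run_def by (auto dest: spec[of _ 1])

lemma open_run_unfold:
  assumes "shift_by p d 1 \<in> Op"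
  shows "open_run Op d p = insert (shift_by p d 1) (open_run Op d (shift_by p d 1))"
proof (intro equalityI subsetI)
  fix c assume "c \<in> open_run Op d p"
  then obtain j where c: "c = shift_by p d j" "1 \<le> j" "\<forall>i. 1 \<le> i \<and> i \<le> j \<longrightarrow> shift_by p d i \<in> Op"
    unfolding open_run_def by blast
  have "c \<in> open_run Op d (shift_by p d 1)" if "j \<noteq> 1"
    unfolding open_run_def
  proof (intro CollectI exI[of _ "j - 1"] conjI allI impI)
    fix i :: int assume "1 \<le> i \<and> i \<le> j - 1"
    then show "shift_by (shift_by p d 1) d i \<in> Op" using c(3)[rule_format, of "1 + i"] by simp
  qed (use c that in auto)
  then show "c \<in> insert (shift_by p d 1) (open_run Op d (shift_by p d 1))"
    using c by fastforce
next
  fix c assume "c \<in> insert (shift_by p d 1) (open_run Op d (shift_by p d 1))"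
  then consider "c = shift_by p d 1"
    | j where "c = shift_by p d (1 + j)" "1 \<le> j" "\<forall>i. 1 \<le> i \<and> i \<le> j \<longrightarrow> shift_by p d (1 + i) \<in> Op"
    unfolding open_run_def by auto
  then show "c \<in> open_run Op d p"
  proof cases
    case 1 then show ?thesis using assms unfolding open_run_def by (intro CollectI exI[of _ 1]) auto
  next
    case (2 j)
    have "shift_by p d i \<in> Op" if "1 \<le> i" "i \<le> 1 + j" for i
      using assms 2(3)[rule_format, of "i - 1"] that by (cases "i = 1") auto
    then show ?thesis using 2 unfolding open_run_def by (intro CollectI exI[of _ "1 + j"]) auto
  qed
qed

lemma open_run_trans:
  assumes "c \<in> open_run Op d p"
  shows "open_run Op d c \<subseteq> open_run Op d p"
proof
  fix x assume "x \<in> open_run Op d c"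
  then obtain k where k: "x = shift_by c d k" "1 \<le> k" "\<forall>i. 1 \<le> i \<and> i \<le> k \<longrightarrow> shift_by c d i \<in> Op"
    unfolding open_run_def by blast
  obtain j where j: "c = shift_by p d j" "1 \<le> j" "\<forall>i. 1 \<le> i \<and> i \<le> j \<longrightarrow> shift_by p d i \<in> Op"
    using assms unfolding open_run_def by blast
  have "shift_by p d i \<in> Op" if "1 \<le> i" "i \<le> j + k" for i
    using j(3) k(3)[rule_format, of "i - j"] that j(1) by (cases "i \<le> j") auto
  then show "x \<in> open_run Op d p"
    using j k unfolding open_run_def by (intro CollectI exI[of _ "j + k"]) auto
qed

lemma shift_in_open_run:
  assumes "c \<in> insert p (open_run Op d p)" "shift_by c d 1 \<in> Op"
  shows "shift_by c d 1 \<in> open_run Op d p"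
  using assms open_run_trans[of c Op d p] open_run_unfold[of c d Op] by auto

lemma unshift_in_open_run:
  assumes "shift_by c d 1 \<in> open_run Op d p" "c \<noteq> p"
  shows "c \<in> open_run Op d p"
proof -
  obtain j where j: "shift_by c d 1 = shift_by p d j" "1 \<le> j" "\<forall>i. 1 \<le> i \<and> i \<le> j \<longrightarrow> shift_by p d i \<in> Op"
    using assms(1) unfolding open_run_def by blast
  have "c = shift_by (shift_by c d 1) d (-1)" by simp
  then have c: "c = shift_by p d (j - 1)" using j(1) by simp
  then have "j \<noteq> 1" using assms(2) by auto
  then show ?thesis using c j(2,3) unfolding open_run_def by (intro CollectI exI[of _ "j - 1"]) auto
qed

lemma stuck_in_dom: "stuck Op d P p \<Longrightarrow> p \<in> dom P"
  by (induction rule: stuck.induct) auto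

lemma stuck_iff_open_run_occupied:
  assumes "finite Op" "dom P \<subseteq> Op" "p \<in> dom P"
  shows "stuck Op d P p \<longleftrightarrow> open_run Op d p \<subseteq> dom P"
proof
  assume "stuck Op d P p"
  then show "open_run Op d p \<subseteq> dom P"
  proof (induction rule: stuck.induct)
    case (blocked p)
    then show ?case using open_run_blocked[of p d Op] by (simp add: shift_eq_shift_by)
  next
    case (chain p)
    then have "shift_by p d 1 \<in> dom P" using stuck_in_dom by (simp add: shift_eq_shift_by)
    moreover from this have "shift_by p d 1 \<in> Op" using assms(2) by blast
    ultimately show ?case using chain.IH by (simp add: open_run_unfold shift_eq_shift_by)
  qed
next
  show "open_run Op d p \<subseteq> dom P \<Longrightarrow> stuck Op d P p"
    using assms(3)
  proof (induction "card (open_run Op d p)" arbitrary: p rule: less_induct)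
    case less
    show ?case
    proof (cases "shift_by p d 1 \<in> Op")
      case False
      then show ?thesis using less.prems stuck.blocked by (simp add: shift_eq_shift_by)
    next
      case True
      note run = open_run_unfold[OF True]
      have "card (open_run Op d p) = Suc (card (open_run Op d (shift_by p d 1)))"
        unfolding run using finite_open_run[OF assms(1)] self_notin_open_run by simp
      then have "stuck Op d P (shift_by p d 1)"
        using less.hyps less.prems(1) run by auto
      then show ?thesis using less.prems(2) stuck.chain by (simp add: shift_eq_shift_by)
    qed
  qed
qed

definition target :: "loc set \<Rightarrow> dir \<Rightarrow> tiles \<Rightarrow> loc \<Rightarrow> loc" where
  "target Op d P p = (if stuck Op d P p then p else shift_by p d 1)"

lemma target_in_open:
  assumes "dom P \<subseteq> Op" "p \<in> dom P"
  shows "target Op d P p \<in> Op"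
  using assms stuck.blocked[of p P d Op] by (auto simp: target_def shift_eq_shift_by)

lemma inj_on_target: "inj_on (target Op d P) (dom P)"
proof (rule inj_onI)
  fix p q assume p: "p \<in> dom P" and q: "q \<in> dom P" and eq: "target Op d P p = target Op d P q"
  have no_pushed_into_stuck: False
    if "stuck Op d P a" "\<not> stuck Op d P b" "b \<in> dom P" "a = shift_by b d 1" for a b
    using that stuck.chain[of b P Op d] by (simp add: shift_eq_shift_by)
  show "p = q"
    using eq no_pushed_into_stuck[OF _ _ p] no_pushed_into_stuck[OF _ _ q]
    by (auto simp: target_def split: if_splits)
qed

lemma step_target: "p \<in> dom P \<Longrightarrow> step Op d P (target Op d P p) = P p"
  unfolding target_def step_def using stuck.chain[of p P Op d]
  by (auto simp: shift_eq_shift_by unshift_eq_shift_by)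

lemma dom_step: "dom (step Op d P) = target Op d P ` dom P"
proof (intro equalityI subsetI)
  fix q assume q: "q \<in> dom (step Op d P)"
  show "q \<in> target Op d P ` dom P"
  proof (cases "q \<in> dom P \<and> stuck Op d P q")
    case True then show ?thesis by (intro image_eqI[of _ _ q]) (auto simp: target_def)
  next
    case False
    then have "unshift q d \<in> dom P \<and> \<not> stuck Op d P (unshift q d)"
      using q unfolding step_def domIff by (auto split: if_splits)
    then show ?thesis
      by (intro image_eqI[of _ _ "unshift q d"]) (auto simp: target_def unshift_eq_shift_by)
  qed
qed (use step_target in fastforce)

lemma dom_step_subset: "dom P \<subseteq> Op \<Longrightarrow> dom (step Op d P) \<subseteq> Op"
  unfolding dom_step using target_in_open by blast

lemma dom_steps_subset: "dom P \<subseteq> Op \<Longrightarrow> dom (steps Op ds P) \<subseteq> Op"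
  by (induction ds arbitrary: P) (simp_all add: dom_step_subset)

lemma steps_append: "steps Op (xs @ ys) P = steps Op ys (steps Op xs P)"
  by (induction xs arbitrary: P) auto

lemma step_empty [simp]: "step Op d Map.empty = Map.empty"
  using dom_step[of Op d Map.empty] by simp

lemma steps_empty: "steps Op ds Map.empty = Map.empty"
  by (induction ds) simp_all

fun track :: "loc set \<Rightarrow> dir list \<Rightarrow> tiles \<Rightarrow> loc \<Rightarrow> loc" where
  "track Op [] P p = p"
| "track Op (d # ds) P p = track Op ds (step Op d P) (target Op d P p)"

lemma steps_track: "p \<in> dom P \<Longrightarrow> steps Op ds P (track Op ds P p) = P p"
  by (induction ds arbitrary: P p) (auto simp: dom_step step_target)

lemma dom_steps: "dom (steps Op ds P) = track Op ds P ` dom P"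
  by (induction ds arbitrary: P) (simp_all add: dom_step image_image)

lemma steps_eqI:
  assumes "\<And>p. p \<in> dom P \<Longrightarrow> track Op ds P p = track Op ds' P p"
  shows "steps Op ds P = steps Op ds' P"
proof
  fix q
  show "steps Op ds P q = steps Op ds' P q"
  proof (cases "q \<in> track Op ds P ` dom P")
    case True
    then obtain p where "p \<in> dom P" "q = track Op ds P p" by blast
    then show ?thesis using assms steps_track[of p P Op] by metis
  next
    case False
    then have "q \<notin> dom (steps Op ds P)" "q \<notin> dom (steps Op ds' P)"
      using assms by (auto simp: dom_steps)
    then show ?thesis by (simp add: domIff)
  qed
qed

section \<open>Free room ahead of a tile\<close>

definition room :: "loc set \<Rightarrow> dir \<Rightarrow> tiles \<Rightarrow> loc \<Rightarrow> nat" where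
  "room Op d P p = card (open_run Op d p - dom P)"

lemma room_eq_card_diff:
  "finite Op \<Longrightarrow> room Op d P p = card (open_run Op d p) - card (open_run Op d p \<inter> dom P)"
  unfolding room_def by (simp add: card_Diff_subset_Int finite_open_run)

lemma room_eq_0_iff_stuck:
  "finite Op \<Longrightarrow> dom P \<subseteq> Op \<Longrightarrow> p \<in> dom P \<Longrightarrow> room Op d P p = 0 \<longleftrightarrow> stuck Op d P p"
  unfolding room_def by (simp add: stuck_iff_open_run_occupied finite_open_run)

lemma card_occupied_step:
  assumes "\<And>q. q \<in> dom P \<Longrightarrow> target Op d P q \<in> B \<longleftrightarrow> q \<in> A"
  shows "card (B \<inter> dom (step Op d P)) = card (A \<inter> dom P)"
proof -
  have "B \<inter> dom (step Op d P) = target Op d P ` (A \<inter> dom P)"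
    unfolding dom_step using assms by blast
  then show ?thesis by (simp add: card_image inj_on_subset[OF inj_on_target])
qed

lemma target_in_open_run_iff:
  assumes "dom P \<subseteq> Op" "p \<in> dom P" "\<not> stuck Op d P p" "q \<in> dom P"
  shows "target Op d P q \<in> open_run Op d (target Op d P p) \<longleftrightarrow> q \<in> open_run Op d p"
proof -
  let ?s = "shift_by p d 1"
  have s: "target Op d P p = ?s" "?s \<in> Op"
    using assms(3) target_in_open[OF assms(1,2), of d] by (auto simp: target_def)
  note run = open_run_unfold[OF s(2)]
  show ?thesis
  proof (cases "stuck Op d P q")
    case True
    then have "q \<noteq> ?s" using assms(3) stuck.chain[OF assms(2)] by (auto simp: shift_eq_shift_by)
    then show ?thesis using True s(1) run by (simp add: target_def)
  next
    case False
    then have t: "target Op d P q = shift_by q d 1" "shift_by q d 1 \<in> Op"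
      using target_in_open[OF assms(1,4), of d] by (auto simp: target_def)
    show ?thesis
    proof
      assume "target Op d P q \<in> open_run Op d (target Op d P p)"
      then have "shift_by q d 1 \<in> open_run Op d p" "q \<noteq> p"
        using t(1) s(1) run self_notin_open_run[of ?s Op d] by auto
      then show "q \<in> open_run Op d p" by (rule unshift_in_open_run)
    next
      assume "q \<in> open_run Op d p"
      then have "shift_by q d 1 \<in> open_run Op d p" "q \<noteq> p"
        using shift_in_open_run t(2) self_notin_open_run[of p] by auto
      then show "target Op d P q \<in> open_run Op d (target Op d P p)"
        using t(1) s(1) run by simp
    qed
  qed
qed

lemma open_run_opp_target:
  assumes "dom P \<subseteq> Op" "p \<in> dom P"
  shows "open_run Op (opp d) (target Op d P p) =
           (if stuck Op d P p then open_run Op (opp d) p else insert p (open_run Op (opp d) p))"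
  using assms open_run_unfold[of "shift_by p d 1" "opp d" Op] by (auto simp: target_def)

lemma target_in_open_run_opp_iff:
  assumes "dom P \<subseteq> Op" "p \<in> dom P" "q \<in> dom P"
  shows "target Op d P q \<in> open_run Op (opp d) (target Op d P p) \<longleftrightarrow> q \<in> open_run Op (opp d) p"
proof -
  let ?R = "open_run Op (opp d)" and ?t = "target Op d P"
  note behind_p = open_run_opp_target[OF assms(1,2), of d]
  show ?thesis
  proof (cases "stuck Op d P q")
    case True
    then have "?t q = q" "\<not> stuck Op d P p \<Longrightarrow> q \<noteq> p" by (auto simp: target_def)
    then show ?thesis using behind_p by (cases "stuck Op d P p") simp_all
  next
    case False
    then have t: "?t q = shift_by q d 1" "shift_by (?t q) (opp d) 1 = q"
      by (simp_all add: target_def)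
    have q_behind: "?R (?t q) = insert q (?R q)"
      using open_run_unfold[of "?t q" "opp d" Op] assms(1,3) unfolding t(2) by blast
    show ?thesis
    proof
      assume tq: "?t q \<in> ?R (?t p)"
      then have "q \<in> ?R (?t p)" using open_run_trans[OF tq] q_behind by blast
      moreover have "q \<noteq> p" using tq self_notin_open_run[of "?t p" Op "opp d"] by blast
      ultimately show "q \<in> ?R p" using behind_p by (simp split: if_splits)
    next
      assume q: "q \<in> ?R p"
      have "shift_by (?t q) (opp d) 1 \<in> ?R (?t p)" using q t(2) behind_p by simp
      moreover have "q \<noteq> p" using q self_notin_open_run[of p] by blast
      then have "?t q \<noteq> ?t p"
        using inj_onD[OF inj_on_target _ assms(3,2)] by blast
      ultimately show "?t q \<in> ?R (?t p)" by (rule unshift_in_open_run)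
    qed
  qed
qed

lemma room_step_forward:
  assumes "finite Op" "dom P \<subseteq> Op" "p \<in> dom P"
  shows "room Op d (step Op d P) (target Op d P p) = room Op d P p - 1"
proof (cases "stuck Op d P p")
  case True
  have "c \<in> dom (step Op d P)" if c: "c \<in> open_run Op d p" for c
  proof -
    have "open_run Op d p \<subseteq> dom P"
      using True stuck_iff_open_run_occupied[OF assms] by blast
    then have "c \<in> dom P" "stuck Op d P c"
      using c open_run_trans[OF c] stuck_iff_open_run_occupied[OF assms(1,2)] by blast+
    then show ?thesis unfolding dom_step by (force simp: target_def)
  qed
  then have "open_run Op d p - dom (step Op d P) = {}" by blast
  then have "room Op d (step Op d P) p = 0" by (simp only: room_def card.empty)
  then show ?thesis using True room_eq_0_iff_stuck[OF assms, of d] by (simp add: target_def)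
next
  case False
  have "card (open_run Op d (target Op d P p)) = card (open_run Op d p) - 1"
    using False target_in_open[OF assms(2,3), of d] open_run_unfold[of p d Op]
      finite_open_run[OF assms(1)] self_notin_open_run
    by (simp add: target_def)
  moreover have "card (open_run Op d (target Op d P p) \<inter> dom (step Op d P)) =
      card (open_run Op d p \<inter> dom P)"
    using target_in_open_run_iff[OF assms(2,3) False] by (rule card_occupied_step)
  ultimately show ?thesis by (simp add: room_eq_card_diff[OF assms(1)])
qed

lemma room_step_backward:
  assumes "finite Op" "dom P \<subseteq> Op" "p \<in> dom P"
  shows "room Op (opp d) (step Op d P) (target Op d P p) =
           room Op (opp d) P p + (if stuck Op d P p then 0 else 1)"
proof -
  let ?R = "open_run Op (opp d)"
  have "card (?R (target Op d P p)) = card (?R p) + (if stuck Op d P p then 0 else 1)"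
    using open_run_opp_target[OF assms(2,3), of d] finite_open_run[OF assms(1)] self_notin_open_run
    by simp
  moreover have "card (?R (target Op d P p) \<inter> dom (step Op d P)) = card (?R p \<inter> dom P)"
    using target_in_open_run_opp_iff[OF assms(2,3)] by (rule card_occupied_step)
  moreover have "card (?R p \<inter> dom P) \<le> card (?R p)"
    by (intro card_mono finite_open_run[OF assms(1)]) blast
  ultimately show ?thesis by (simp add: room_eq_card_diff[OF assms(1)])
qed

text \<open>Under steps along the axis of \<open>d\<close> the room of a tile towards \<open>d\<close> behaves like a counter
  in \<open>{0..T}\<close>, where \<open>T\<close> is its total room on both sides: a step towards \<open>d\<close> uses up one unit
  (if any), a step away frees one unit (unless none is left on the other side).\<close>

fun walk :: "nat \<Rightarrow> dir \<Rightarrow> dir list \<Rightarrow> nat \<Rightarrow> nat" where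
  "walk T d [] r = r"
| "walk T d (x # xs) r = walk T d xs (if x = d then r - 1 else min (r + 1) T)"

lemma room_step_along_axis:
  assumes "finite Op" "dom P \<subseteq> Op" "p \<in> dom P" "x \<in> {d, opp d}"
  defines "P' \<equiv> step Op x P" and "p' \<equiv> target Op x P p"
    and "T \<equiv> room Op d P p + room Op (opp d) P p"
  shows "room Op d P' p' + room Op (opp d) P' p' = T"
    and "room Op d P' p' = walk T d [x] (room Op d P p)"
    and "p' = shift_by p d (int (room Op d P p) - int (room Op d P' p'))"
proof -
  have "room Op d P' p' + room Op (opp d) P' p' = T \<and>
        room Op d P' p' = walk T d [x] (room Op d P p) \<and>
        p' = shift_by p d (int (room Op d P p) - int (room Op d P' p'))"
  proof (cases "x = d")
    case True
    then show ?thesis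
      using room_step_forward[OF assms(1-3), of d] room_step_backward[OF assms(1-3), of d]
        room_eq_0_iff_stuck[OF assms(1-3), of d]
      unfolding P'_def p'_def T_def by (auto simp: target_def)
  next
    case False
    then have x: "x = opp d" using assms(4) by simp
    then show ?thesis
      using room_step_forward[OF assms(1-3), of x] room_step_backward[OF assms(1-3), of x]
        room_eq_0_iff_stuck[OF assms(1-3), of x]
      unfolding P'_def p'_def T_def by (auto simp: target_def shift_by_opp)
  qed
  then show "room Op d P' p' + room Op (opp d) P' p' = T"
    and "room Op d P' p' = walk T d [x] (room Op d P p)"
    and "p' = shift_by p d (int (room Op d P p) - int (room Op d P' p'))"
    by blast+
qed

lemma track_along_axis:
  assumes "finite Op" "dom P \<subseteq> Op" "p \<in> dom P" "set xs \<subseteq> {d, opp d}"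
  defines "T \<equiv> room Op d P p + room Op (opp d) P p"
  shows "room Op d (steps Op xs P) (track Op xs P p) = walk T d xs (room Op d P p) \<and>
         room Op d (steps Op xs P) (track Op xs P p) + room Op (opp d) (steps Op xs P) (track Op xs P p) = T \<and>
         track Op xs P p = shift_by p d (int (room Op d P p) - int (room Op d (steps Op xs P) (track Op xs P p)))"
  using assms(2-4) unfolding T_def
proof (induction xs arbitrary: P p)
  case (Cons x xs)
  let ?P' = "step Op x P" and ?p' = "target Op x P p"
  let ?Q = "steps Op xs ?P'" and ?q = "track Op xs ?P' ?p'"
  let ?r = "room Op d P p" and ?r' = "room Op d ?P' ?p'" and ?rq = "room Op d ?Q ?q"
  have hyps: "dom ?P' \<subseteq> Op" "?p' \<in> dom ?P'" "x \<in> {d, opp d}" "set xs \<subseteq> {d, opp d}"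
    using Cons.prems dom_step_subset[of P Op x] unfolding dom_step by auto
  note one = room_step_along_axis[OF assms(1) Cons.prems(1,2) hyps(3)]
  let ?T = "room Op d P p + room Op (opp d) P p"
  let ?T' = "room Op d ?P' ?p' + room Op (opp d) ?P' ?p'"
  have IH: "?rq = walk ?T' d xs ?r'" "?rq + room Op (opp d) ?Q ?q = ?T'"
    "?q = shift_by ?p' d (int ?r' - int ?rq)"
    using Cons.IH[OF hyps(1,2,4)] by blast+
  have walk_Cons: "walk ?T d (x # xs) ?r = walk ?T d xs (walk ?T d [x] ?r)" by simp
  have "?q = shift_by (shift_by p d (int ?r - int ?r')) d (int ?r' - int ?rq)"
    using IH(3) one(3) by metis
  then have "?q = shift_by p d (int ?r - int ?rq)" by simp
  moreover have "?rq = walk ?T d (x # xs) ?r"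
    by (simp only: IH(1) one(1) one(2)[symmetric] walk_Cons)
  moreover have "?rq + room Op (opp d) ?Q ?q = ?T"
    by (simp only: IH(2) one(1))
  ultimately show ?case by simp
qed simp

lemma steps_eq_if_walk_eq:
  assumes "finite Op" "dom P \<subseteq> Op" "set xs \<subseteq> {d, opp d}" "set ys \<subseteq> {d, opp d}"
    and "\<And>p. p \<in> dom P \<Longrightarrow>
      walk (room Op d P p + room Op (opp d) P p) d xs (room Op d P p) =
      walk (room Op d P p + room Op (opp d) P p) d ys (room Op d P p)"
  shows "steps Op xs P = steps Op ys P"
proof (rule steps_eqI)
  fix p assume "p \<in> dom P"
  then show "track Op xs P p = track Op ys P p"
    using track_along_axis[OF assms(1,2) _ assms(3)] track_along_axis[OF assms(1,2) _ assms(4)]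
      assms(5) by metis
qed

lemma walk_append: "walk T d (xs @ ys) r = walk T d ys (walk T d xs r)"
  by (induction xs arbitrary: r) auto

lemma walk_replicate_toward: "walk T d (replicate k d) r = r - k"
  by (induction k arbitrary: r) auto

lemma walk_replicate_away: "r \<le> T \<Longrightarrow> walk T d (replicate k (opp d)) r = min (r + k) T"
  by (induction k arbitrary: r) auto

lemma walk_zigzag:
  assumes "r \<le> T" "X \<in> {d, opp d}"
  shows "walk T d (replicate b X @ replicate b (opp X) @ replicate b X) r = walk T d (replicate b X) r"
  using assms
  by (auto simp: walk_append walk_replicate_toward walk_replicate_away min_def
      simp del: replicate_append_same)

lemma walk_overshoot:
  assumes "r \<le> T" "T \<le> w" "X \<in> {d, opp d}"
  shows "walk T d (replicate (Suc w) X) r = walk T d (replicate w X) r"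
  using assms by (auto simp: walk_replicate_toward walk_replicate_away)

lemma steps_zigzag:
  assumes "finite Op" "dom P \<subseteq> Op" "X \<in> {d, opp d}"
  shows "steps Op (replicate b X @ replicate b (opp X) @ replicate b X) P = steps Op (replicate b X) P"
  using assms by (intro steps_eq_if_walk_eq[OF assms(1,2)] walk_zigzag) auto

lemma steps_overshoot:
  assumes "finite Op" "dom P \<subseteq> Op" "X \<in> {d, opp d}"
    and "\<And>p. p \<in> dom P \<Longrightarrow> room Op d P p + room Op (opp d) P p \<le> w"
  shows "steps Op (replicate (Suc w) X) P = steps Op (replicate w X) P"
  using assms by (intro steps_eq_if_walk_eq[OF assms(1,2)] walk_overshoot) auto

lemma room_total_less_card_line:
  assumes "finite Op" "p \<in> Op"
  shows "room Op d P p + room Op (opp d) P p < card (Op \<inter> range (shift_by p d))"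
proof -
  let ?A = "open_run Op d p" and ?B = "open_run Op (opp d) p"
  have "?A \<inter> ?B = {}"
    unfolding open_run_def shift_by_opp by auto
  moreover have "insert p (?A \<union> ?B) \<subseteq> Op \<inter> range (shift_by p d)"
    using assms(2) open_run_subset[of Op] unfolding open_run_def shift_by_opp
    by (auto intro: range_eqI[of _ _ 0])
  moreover have "p \<notin> ?A" "p \<notin> ?B" by (rule self_notin_open_run)+
  ultimately have "Suc (card ?A + card ?B) \<le> card (Op \<inter> range (shift_by p d))"
    using card_mono[of "Op \<inter> range (shift_by p d)" "insert p (?A \<union> ?B)"] assms(1)
    by (simp add: finite_open_run card_Un_disjoint)
  moreover have "room Op d P p \<le> card ?A" "room Op (opp d) P p \<le> card ?B"
    unfolding room_def by (auto intro: card_mono finite_open_run assms(1))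
  ultimately show ?thesis by linarith
qed

lemma room_total_le_width:
  assumes "board l w Op" "p \<in> Op"
  shows "room Op E P p + room Op W P p \<le> w"
proof -
  have Op: "Op \<subseteq> {0..<int w} \<times> {0..<int l}" using assms(1) by (simp add: board_def)
  then have "Op \<inter> range (shift_by p E) \<subseteq> {0..<int w} \<times> {snd p}"
    by (auto simp: shift_by_def)
  then have "card (Op \<inter> range (shift_by p E)) \<le> w"
    using card_mono[of "{0..<int w} \<times> {snd p}"] by (simp add: card_cartesian_product)
  moreover have "finite Op" using Op finite_subset by blast
  ultimately show ?thesis
    using room_total_less_card_line[OF _ assms(2), of E P] by simp
qed

section \<open>Two-letter words without zigzags and long runs\<close>

fun alternate :: "'a \<Rightarrow> 'a \<Rightarrow> nat list \<Rightarrow> 'a list" where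
  "alternate a b [] = []"
| "alternate a b (k # ks) = replicate k a @ alternate b a ks"

lemma length_alternate: "length (alternate a b ks) = sum_list ks"
  by (induction ks arbitrary: a b) auto

lemma alternate_runs_exist:
  "set u \<subseteq> {a, b} \<Longrightarrow>
   \<exists>X Y ks. {X, Y} = {a, b} \<and> (\<forall>k\<in>set ks. 1 \<le> k) \<and> u = alternate X Y ks"
proof (induction u)
  case Nil
  show ?case by (intro exI[of _ a] exI[of _ b] exI[of _ "[]"]) simp
next
  case (Cons x u)
  then obtain X Y ks where u: "{X, Y} = {a, b}" "\<forall>k\<in>set ks. 1 \<le> k" "u = alternate X Y ks"
    by auto
  have x: "x = X \<or> x = Y" using Cons.prems u(1) by auto
  have swap: "{Y, X} = {a, b}" using u(1) by (simp add: insert_commute)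
  show ?case
  proof (cases "x = X")
    case True
    show ?thesis
    proof (cases ks)
      case Nil
      then show ?thesis using u True by (intro exI[of _ X] exI[of _ Y] exI[of _ "[1]"]) simp
    next
      case (Cons k ks')
      then show ?thesis using u True by (intro exI[of _ X] exI[of _ Y] exI[of _ "Suc k # ks'"]) simp
    qed
  next
    case False
    then show ?thesis using u swap x by (intro exI[of _ Y] exI[of _ X] exI[of _ "1 # ks"]) simp
  qed
qed

fun has_valley :: "nat list \<Rightarrow> bool" where
  "has_valley (a # b # c # t) = ((b \<le> a \<and> b \<le> c) \<or> has_valley (b # c # t))"
| "has_valley _ = False"

lemma has_valley_Cons: "has_valley t \<Longrightarrow> has_valley (a # t)"
  by (cases t rule: has_valley.cases) auto

lemma zigzag_sublist_if_has_valley: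
  "has_valley ks \<Longrightarrow> \<forall>k\<in>set ks. 1 \<le> k \<Longrightarrow>
   \<exists>k X Y. 1 \<le> k \<and> {X, Y} = {a, b} \<and>
     sublist (replicate k X @ replicate k Y @ replicate k X) (alternate a b ks)"
proof (induction ks arbitrary: a b rule: has_valley.induct)
  case (1 i j k t)
  show ?case
  proof (cases "j \<le> i \<and> j \<le> k")
    case True
    then have "alternate a b (i # j # k # t) =
        replicate (i - j) a @ (replicate j a @ replicate j b @ replicate j a) @
        (replicate (k - j) a @ alternate b a t)"
      by (simp flip: replicate_add)
    then have "sublist (replicate j a @ replicate j b @ replicate j a) (alternate a b (i # j # k # t))"
      by (simp only: sublist_appendI)
    moreover have "1 \<le> j" using "1.prems" by simp
    ultimately show ?thesis by (intro exI[of _ j] exI[of _ a] exI[of _ b]) simp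
  next
    case False
    have "has_valley (j # k # t)" "\<forall>k\<in>set (j # k # t). 1 \<le> k" using False "1.prems" by auto
    from "1.IH"[OF this, of b a] obtain k' X Y where "1 \<le> k'" "{X, Y} = {b, a}"
        "sublist (replicate k' X @ replicate k' Y @ replicate k' X) (alternate b a (j # k # t))"
      by blast
    moreover have "sublist (alternate b a (j # k # t)) (alternate a b (i # j # k # t))"
      by simp
    ultimately show ?thesis
      by (intro exI[of _ k'] exI[of _ X] exI[of _ Y]) (auto dest: sublist_order.order.trans)
  qed
qed simp_all

lemma long_run_sublist:
  "k \<in> set ks \<Longrightarrow> w < k \<Longrightarrow> \<exists>X\<in>{a, b}. sublist (replicate (Suc w) X) (alternate a b ks)"
proof (induction ks arbitrary: a b)
  case (Cons i ks)
  show ?case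
  proof (cases "k = i")
    case True
    then have "replicate i a = replicate (Suc w) a @ replicate (i - Suc w) a"
      using Cons.prems by (metis Suc_leI le_add_diff_inverse replicate_add)
    then have "sublist (replicate (Suc w) a) (alternate a b (i # ks))"
      by (metis alternate.simps(2) append.assoc sublist_append_rightI)
    then show ?thesis by blast
  next
    case False
    then have "k \<in> set ks" using Cons.prems by simp
    from Cons.IH[OF this Cons.prems(2), of b a]
    obtain X where "X \<in> {a, b}" "sublist (replicate (Suc w) X) (alternate b a ks)" by blast
    moreover have "sublist (alternate b a ks) (alternate a b (i # ks))" by simp
    ultimately show ?thesis by (auto dest: sublist_order.order.trans)
  qed
qed simp

lemma strictly_decreasing_if_no_valley:
  "\<not> has_valley (a # t) \<Longrightarrow> (t \<noteq> [] \<longrightarrow> hd t \<le> a) \<Longrightarrow> sorted_wrt (>) t"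
proof (induction t arbitrary: a)
  case (Cons b t)
  show ?case
  proof (cases t)
    case (Cons c t')
    then have "b \<le> a" "\<not> has_valley (b # t)" "c < b" using Cons.prems by auto
    then have "sorted_wrt (>) t" using Cons.IH[of b] \<open>t = c # t'\<close> by simp
    then show ?thesis using \<open>c < b\<close> \<open>t = c # t'\<close> by auto
  qed simp
qed simp

lemma unimodal_if_no_valley:
  "\<not> has_valley ks \<Longrightarrow> \<exists>ys zs. ks = ys @ zs \<and> sorted_wrt (<) ys \<and> sorted_wrt (>) zs"
proof (induction ks)
  case (Cons a t)
  have "\<not> has_valley t" using Cons.prems has_valley_Cons by blast
  then obtain ys zs where yz: "t = ys @ zs" "sorted_wrt (<) ys" "sorted_wrt (>) zs"
    using Cons.IH by blast
  show ?case
  proof (cases "t = [] \<or> hd t \<le> a")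
    case True
    then have "sorted_wrt (>) t" using strictly_decreasing_if_no_valley[OF Cons.prems] by auto
    then show ?thesis by (intro exI[of _ "[a]"] exI[of _ t]) simp
  next
    case False
    show ?thesis
    proof (cases ys)
      case Nil
      then show ?thesis using yz by (intro exI[of _ "[a]"] exI[of _ t]) simp
    next
      case (Cons y ys')
      then have "a < y" using yz False by simp
      then have "\<forall>x\<in>set ys. a < x" using yz(2) Cons by auto
      then show ?thesis using yz by (intro exI[of _ "a # ys"] exI[of _ zs]) auto
    qed
  qed
qed simp

lemma sum_list_le_square_if_sorted_wrt:
  assumes "sorted_wrt R xs" "\<And>x. \<not> R x x" "\<forall>x\<in>set xs. 1 \<le> x \<and> x \<le> (w::nat)"
  shows "sum_list xs \<le> w * w"
proof -
  have "distinct xs" using assms(1,2) by (induction xs) auto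
  moreover have "card (set xs) \<le> card {1..w}"
    using assms(3) by (intro card_mono) auto
  ultimately have "length xs \<le> w" by (simp add: distinct_card)
  moreover have "sum_list xs \<le> length xs * w"
    using assms(3) by (induction xs) auto
  ultimately show ?thesis by (meson le_trans mult_le_mono1)
qed

lemma sum_list_le_if_no_valley:
  assumes "\<not> has_valley ks" "\<forall>k\<in>set ks. 1 \<le> k \<and> k \<le> (w::nat)"
  shows "sum_list ks \<le> 2 * w * w"
proof -
  obtain ys zs where yz: "ks = ys @ zs" "sorted_wrt (<) ys" "sorted_wrt (>) zs"
    using unimodal_if_no_valley[OF assms(1)] by blast
  have "sum_list ys \<le> w * w" "sum_list zs \<le> w * w"
    using sum_list_le_square_if_sorted_wrt[OF yz(2)] sum_list_le_square_if_sorted_wrt[OF yz(3)]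
      assms(2) yz(1) by auto
  then show ?thesis using yz(1) by simp
qed

definition reduced_word :: "nat \<Rightarrow> 'a \<Rightarrow> 'a \<Rightarrow> 'a list \<Rightarrow> bool" where
  "reduced_word w a b u \<longleftrightarrow>
     (\<forall>k X Y. 1 \<le> k \<longrightarrow> {X, Y} = {a, b} \<longrightarrow>
        \<not> sublist (replicate k X @ replicate k Y @ replicate k X) u) \<and>
     (\<forall>X\<in>{a, b}. \<not> sublist (replicate (Suc w) X) u)"

lemma reduced_word_sublist: "reduced_word w a b u \<Longrightarrow> sublist v u \<Longrightarrow> reduced_word w a b v"
  unfolding reduced_word_def by (meson sublist_order.order.trans)

lemma length_reduced_word_le:
  assumes "set u \<subseteq> {a, b}" "reduced_word w a b u"
  shows "length u \<le> 2 * w * w"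
proof -
  obtain X Y ks where u: "{X, Y} = {a, b}" "\<forall>k\<in>set ks. 1 \<le> k" "u = alternate X Y ks"
    using alternate_runs_exist[OF assms(1)] by blast
  have "\<not> has_valley ks"
    using zigzag_sublist_if_has_valley[OF _ u(2), of X Y] assms(2) u(1,3)
    unfolding reduced_word_def by auto
  moreover have "\<forall>k\<in>set ks. 1 \<le> k \<and> k \<le> w"
    using long_run_sublist[of _ ks w X Y] assms(2) u unfolding reduced_word_def
    by (metis insert_commute not_le)
  ultimately show ?thesis using sum_list_le_if_no_valley u(3) by (simp add: length_alternate)
qed

lemma length_reduced_word_separated_le:
  assumes "set u \<subseteq> {a, b, c}" "reduced_word w a b u"
  shows "length u \<le> count_list u c + (count_list u c + 1) * (2 * w * w)"
  using assms
proof (induction "length u" arbitrary: u rule: less_induct)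
  case less
  show ?case
  proof (cases "c \<in> set u")
    case False
    then show ?thesis using length_reduced_word_le[of u a b w] less.prems by auto
  next
    case True
    then obtain v u' where u: "u = v @ c # u'" "c \<notin> set v" by (metis split_list_first)
    have "sublist v u" "sublist u' u"
      using sublist_append_rightI[of v "c # u'"] sublist_append_leftI[of u' "v @ [c]"] u(1) by simp_all
    then have reduced: "reduced_word w a b v" "reduced_word w a b u'"
      using reduced_word_sublist[OF less.prems(2)] by simp_all
    have "length v \<le> 2 * w * w"
      using length_reduced_word_le[OF _ reduced(1)] less.prems(1) u by auto
    moreover have "length u' \<le> count_list u' c + (count_list u' c + 1) * (2 * w * w)"
      using less.hyps[of u'] reduced(2) less.prems(1) u by auto
    ultimately show ?thesis using u by (simp add: algebra_simps)
  qed
qed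

section \<open>Shortest step sequences\<close>

definition height_sum :: "tiles \<Rightarrow> nat" where
  "height_sum P = (\<Sum>q\<in>dom P. nat (snd q))"

lemma height_sum_step:
  "height_sum (step Op d P) = (\<Sum>p\<in>dom P. nat (snd (target Op d P p)))"
  unfolding height_sum_def dom_step by (rule sum.reindex[OF inj_on_target, unfolded comp_def])

lemma step_eq_if_all_stuck: "\<forall>p\<in>dom P. stuck Op d P p \<Longrightarrow> step Op d P = P"
proof
  fix q assume "\<forall>p\<in>dom P. stuck Op d P p"
  then show "step Op d P q = P q"
    by (cases "q \<in> dom P") (auto simp: step_def domIff)
qed

lemma height_sum_step_le:
  assumes "d \<in> {W, S, E}"
  shows "height_sum (step Op d P) \<le> height_sum P"
  unfolding height_sum_step unfolding height_sum_def
  using assms by (intro sum_mono) (auto simp: target_def shift_by_def)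

lemma height_sum_step_south_less:
  assumes "finite Op" "dom P \<subseteq> Op" "\<forall>q\<in>Op. 0 \<le> snd q" "step Op S P \<noteq> P"
  shows "height_sum (step Op S P) < height_sum P"
proof -
  obtain p where p: "p \<in> dom P" "\<not> stuck Op S P p"
    using assms(4) step_eq_if_all_stuck by blast
  have "0 \<le> snd (target Op S P p)" using target_in_open[OF assms(2) p(1)] assms(3) by blast
  then have "nat (snd (target Op S P p)) < nat (snd p)"
    using p(2) by (simp add: target_def shift_by_def)
  moreover have "finite (dom P)" using assms(1,2) finite_subset by blast
  moreover have "\<forall>q\<in>dom P. nat (snd (target Op S P q)) \<le> nat (snd q)"
    by (auto simp: target_def shift_by_def)
  ultimately have "(\<Sum>q\<in>dom P. nat (snd (target Op S P q))) < (\<Sum>q\<in>dom P. nat (snd q))"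
    by (metis sum_strict_mono_ex1 p(1))
  then show ?thesis unfolding height_sum_step unfolding height_sum_def .
qed

lemma height_sum_le:
  assumes "board l w Op" "dom P \<subseteq> Op"
  shows "height_sum P \<le> card (dom P) * l"
proof -
  have "nat (snd q) \<le> l" if "q \<in> dom P" for q
  proof -
    have "q \<in> {0..<int w} \<times> {0..<int l}" using that assms by (auto simp: board_def)
    then show ?thesis by (cases q) auto
  qed
  then have "height_sum P \<le> (\<Sum>q\<in>dom P. l)" unfolding height_sum_def by (rule sum_mono)
  then show ?thesis by simp
qed

definition shortest :: "loc set \<Rightarrow> tiles \<Rightarrow> dir list \<Rightarrow> bool" where
  "shortest Op P ds \<longleftrightarrow> set ds \<subseteq> {W, S, E} \<and>
     (\<forall>ds'. set ds' \<subseteq> {W, S, E} \<and> steps Op ds' P = steps Op ds P \<longrightarrow> length ds \<le> length ds')"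

lemma shortest_exists:
  assumes "set ds \<subseteq> {W, S, E}"
  obtains ds' where "shortest Op P ds'" "steps Op ds' P = steps Op ds P"
proof -
  let ?reaches = "\<lambda>ds'. set ds' \<subseteq> {W, S, E} \<and> steps Op ds' P = steps Op ds P"
  obtain ds' where "?reaches ds'" "\<And>ds''. ?reaches ds'' \<Longrightarrow> length ds' \<le> length ds''"
    using ex_has_least_nat[of ?reaches ds length] assms by blast
  then show ?thesis using that unfolding shortest_def by auto
qed

lemma shortest_le:
  "shortest Op P ds \<Longrightarrow> set ds' \<subseteq> {W, S, E} \<Longrightarrow> steps Op ds' P = steps Op ds P \<Longrightarrow>
   length ds \<le> length ds'"
  unfolding shortest_def by blast

lemma shortest_drop:
  assumes "shortest Op P (xs @ ys)"
  shows "shortest Op (steps Op xs P) ys"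
  unfolding shortest_def
proof (intro conjI allI impI)
  show "set ys \<subseteq> {W, S, E}" using assms by (simp add: shortest_def)
  fix ys' assume "set ys' \<subseteq> {W, S, E} \<and> steps Op ys' (steps Op xs P) = steps Op ys (steps Op xs P)"
  then have "length (xs @ ys) \<le> length (xs @ ys')"
    using shortest_le[OF assms, of "xs @ ys'"] assms by (simp add: steps_append shortest_def)
  then show "length ys \<le> length ys'" by simp
qed

lemma shortest_prefix_le:
  assumes "shortest Op P (xs @ ys)" "set xs' \<subseteq> {W, S, E}" "steps Op xs' P = steps Op xs P"
  shows "length xs \<le> length xs'"
proof -
  have "length (xs @ ys) \<le> length (xs' @ ys)"
    using shortest_le[OF assms(1), of "xs' @ ys"] assms by (simp add: steps_append shortest_def)
  then show ?thesis by simp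
qed

lemma shortest_step_moves:
  assumes "shortest Op P (x # ds)"
  shows "step Op x P \<noteq> P"
  using shortest_prefix_le[of Op P "[x]" ds "[]"] assms by auto

lemma count_south_le_height_sum:
  assumes "finite Op" "\<forall>q\<in>Op. 0 \<le> snd q" "dom P \<subseteq> Op" "shortest Op P ds"
  shows "count_list ds S \<le> height_sum P"
  using assms(3,4)
proof (induction ds arbitrary: P)
  case (Cons x ds)
  have "count_list ds S \<le> height_sum (step Op x P)"
    using Cons.IH[of "step Op x P"] Cons.prems shortest_drop[of Op P "[x]" ds]
    by (simp add: dom_step_subset)
  moreover have "x \<in> {W, S, E}" using Cons.prems(2) by (simp add: shortest_def)
  ultimately show ?case
    using height_sum_step_le[of x Op P] height_sum_step_south_less[OF assms(1) Cons.prems(1) assms(2)]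
      shortest_step_moves[OF Cons.prems(2)] by fastforce
qed simp

lemma shortest_reduced_word:
  assumes "board l w Op" "dom P \<subseteq> Op" "shortest Op P ds"
  shows "reduced_word w E W ds"
proof -
  have fin: "finite Op" using assms(1) finite_subset unfolding board_def by blast
  have dom: "dom (steps Op xs P) \<subseteq> Op" for xs using dom_steps_subset[OF assms(2)] .
  have no_shortcut: "length v \<le> length v'"
    if "ds = xs @ v @ ys" "set v' \<subseteq> {W, S, E}" "steps Op v' (steps Op xs P) = steps Op v (steps Op xs P)"
    for xs v ys v'
    using shortest_prefix_le[OF shortest_drop[of Op P xs "v @ ys"] that(2,3)] assms(3) that(1) by simp
  show ?thesis unfolding reduced_word_def
  proof (intro conjI allI impI ballI notI)
    fix k X Y assume k: "1 \<le> k" and XY: "{X, Y} = {E, W}"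
      and "sublist (replicate k X @ replicate k Y @ replicate k X) ds"
    then obtain xs ys where ds: "ds = xs @ (replicate k X @ replicate k Y @ replicate k X) @ ys"
      by (auto simp: sublist_def)
    have X: "X \<in> {E, opp E}" "Y = opp X" using XY by (auto simp: doubleton_eq_iff)
    have "length (replicate k X @ replicate k Y @ replicate k X) \<le> length (replicate k X)"
      by (rule no_shortcut[OF ds]) (use X steps_zigzag[OF fin dom X(1)] in auto)
    then show False using k by simp
  next
    fix X assume "X \<in> {E, W}" "sublist (replicate (Suc w) X) ds"
    then obtain xs ys where ds: "ds = xs @ replicate (Suc w) X @ ys" and X: "X \<in> {E, opp E}"
      by (auto simp: sublist_def)
    have "room Op E (steps Op xs P) p + room Op (opp E) (steps Op xs P) p \<le> w"
      if "p \<in> dom (steps Op xs P)" for p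
    proof -
      have "p \<in> Op" using dom[of xs] that by blast
      then show ?thesis using room_total_le_width[OF assms(1)] by simp
    qed
    then have "length (replicate (Suc w) X) \<le> length (replicate w X)"
      by (intro no_shortcut[OF ds]) (use X steps_overshoot[OF fin dom X] in auto)
    then show False by simp
  qed
qed

lemma arith_bound:
  fixes c N K :: nat
  assumes "c \<le> N" "1 \<le> N" "1 \<le> K"
  shows "c + (c + 1) * (2 * K) \<le> 5 * N * K"
proof -
  have "c \<le> N * K" using assms by (metis le_trans mult_le_mono2 nat_mult_1_right)
  moreover have "(c + 1) * (2 * K) \<le> (N + N) * (2 * K)" using assms by (intro mult_le_mono1) simp
  ultimately show ?thesis by (simp add: algebra_simps)
qed

lemma length_shortest_le:
  assumes "board l w Op" "dom P \<subseteq> Op" "shortest Op P ds"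
  shows "length ds \<le> 5 * card (dom P) * l * w ^ 2"
proof (cases "dom P = {}")
  case True
  then have "steps Op [] P = steps Op ds P" by (simp add: steps_empty)
  then show ?thesis using shortest_prefix_le[of Op P ds "[]" "[]"] assms(3) by simp
next
  case False
  have Op: "Op \<subseteq> {0..<int w} \<times> {0..<int l}" using assms(1) by (simp add: board_def)
  then have fin: "finite Op" using finite_subset by blast
  obtain q where "q \<in> dom P" using False by blast
  then have "q \<in> {0..<int w} \<times> {0..<int l}" using assms(2) Op by blast
  then have "1 \<le> l" "1 \<le> w" by (cases q, simp)+
  have "finite (dom P)" using assms(2) fin finite_subset by blast
  then have "1 \<le> card (dom P)" using False by (simp add: Suc_le_eq card_gt_0_iff)
  have "\<forall>q\<in>Op. 0 \<le> snd q" using Op by auto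
  then have "count_list ds S \<le> card (dom P) * l"
    using count_south_le_height_sum[OF fin _ assms(2,3)] height_sum_le[OF assms(1,2)] by simp
  moreover have "set ds \<subseteq> {E, W, S}" using assms(3) by (auto simp: shortest_def)
  then have "length ds \<le> count_list ds S + (count_list ds S + 1) * (2 * w * w)"
    by (rule length_reduced_word_separated_le[OF _ shortest_reduced_word[OF assms]])
  ultimately show ?thesis
    using arith_bound[of "count_list ds S" "card (dom P) * l" "w * w"] \<open>1 \<le> l\<close> \<open>1 \<le> w\<close>
      \<open>1 \<le> card (dom P)\<close> by (simp add: power2_eq_square mult.assoc)
qed

theorem lemma2:
  "\<exists>c::nat. \<forall>(l::nat) (w::nat) (Op::loc set) (P::tiles) (P'::tiles).
     board l w Op \<and> config Op P \<and> config Op P' \<and>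
     (\<exists>ds. set ds \<subseteq> {W, S, E} \<and> steps Op ds P = P') \<longrightarrow>
     (\<exists>ds. set ds \<subseteq> {W, S, E} \<and>
           length ds \<le> c * card (dom P) * l * w ^ 2 \<and> steps Op ds P = P')"
proof (intro exI[of _ 5] allI impI)
  fix l w :: nat and Op :: "loc set" and P P' :: tiles
  assume H: "board l w Op \<and> config Op P \<and> config Op P' \<and>
    (\<exists>ds. set ds \<subseteq> {W, S, E} \<and> steps Op ds P = P')"
  then obtain ds where "set ds \<subseteq> {W, S, E}" "steps Op ds P = P'" by blast
  then obtain ds' where "shortest Op P ds'" "steps Op ds' P = P'" by (metis shortest_exists)
  moreover have "board l w Op" "dom P \<subseteq> Op" using H by (auto simp: config_def)
  ultimately show "\<exists>ds. set ds \<subseteq> {W, S, E} \<and> length ds \<le> 5 * card (dom P) * l * w ^ 2 \<and>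
      steps Op ds P = P'"
    using length_shortest_le by (auto simp: shortest_def)
qed

end
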